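(* Let $\alpha\in(0,1)$, $0<\varepsilon\le1/4$, a spending sequence $(\varepsilon_t)_{t\ge0}$ and the stopping boundaries $U_t,L_t$ be as in the context, and suppose there exist $\lambda>0$, $q>0$, $T\in\mathbb{N}$ with $\varepsilon_t-\varepsilon_{t-1}\ge\lambda t^{-q}$ for all $t\ge T$. Let $p$ be a $[0,1]$-valued random variable with CDF $F$ that is H\"older continuous with exponent $\xi>0$ in a neighborhood of $\alpha$ (there exist an open interval $V\ni\alpha$ and $c>0$ with $|F(x)-F(y)|\le c|x-y|^\xi$ for $x,y\in V$). Conditionally on $p$, let $X_1,X_2,\dots$ be i.i.d. Bernoulli$(p)$, $S_t=\sum_{j=1}^tX_j$, and $\tau=\inf\{t\in\mathbb{N}:S_t\ge U_t\text{ or }S_t\le L_t\}$. Then for any $\eta\in(0,1)$ there exist constants $\kappa$ and $\tilde T$ such that $\mathbb{P}(\tau>t)\le 2e^{-2t^\eta}+\kappa t^{\xi(\eta-1)/2}$ for all $t\ge\tilde T$. Hence $\mathbb{P}(\tau>t)=o(t^d)$ as $t\to\infty$ for any $d>-\xi/2$.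
   Context: $\mathbb{N}=\{1,2,\dots\}$. A spending sequence is a sequence $(\varepsilon_t)_{t\ge0}$ of reals with $0\le\varepsilon_0\le\varepsilon_1\le\cdots$ and $\varepsilon_t\to\varepsilon$. For $r\in[0,1]$, $\mathbb{P}_r$ denotes a probability under which $X_1,X_2,\dots$ are i.i.d. Bernoulli$(r)$, $S_t=\sum_{j=1}^tX_j$. The stopping boundaries are defined recursively: with $\tau=\inf\{t\in\mathbb{N}:S_t\ge U_t\text{ or }S_t\le L_t\}$ ($\inf\emptyset=\infty$; the events $\{\tau\ge t\}$, $\{\tau<t,S_\tau\ge U_\tau\}$, $\{\tau<t,S_\tau\le L_\tau\}$ only involve $U_s,L_s$, $s<t$), $U_t=\min\{j\in\mathbb{N}:\mathbb{P}_\alpha(\tau\ge t,S_t\ge j)+\mathbb{P}_\alpha(\tau<t,S_\tau\ge U_\tau)\le\varepsilon_t\}$ and $L_t=\max\{j\in\mathbb{Z}:\mathbb{P}_\alpha(\tau\ge t,S_t\le j)+\mathbb{P}_\alpha(\tau<t,S_\tau\le L_\tau)\le\varepsilon_t\}$. *)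

theory Defs
  imports "HOL-Probability.Probability" "HOL-Library.Landau_Symbols"
begin

text \<open>Paths of length t of Bernoulli observations are bool lists; under P_r the
probability of a path is the product of r (for 1) and 1-r (for 0).\<close>

definition path_prob :: "real \<Rightarrow> bool list \<Rightarrow> real" where
  "path_prob r xs = (\<Prod>x\<leftarrow>xs. if x then r else 1 - r)"

text \<open>P_r of an event depending only on the first t observations.\<close>
definition Pr :: "real \<Rightarrow> nat \<Rightarrow> (bool list \<Rightarrow> bool) \<Rightarrow> real" where
  "Pr r t A = (\<Sum>xs\<in>{xs. length xs = t \<and> A xs}. path_prob r xs)"

definition Sn :: "bool list \<Rightarrow> nat \<Rightarrow> int" where
  "Sn xs s = int (length (filter id (take s xs)))"

text \<open>Boundaries are stored as B s = (U_s, L_s).\<close>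

text \<open>Event tau >= t: no stopping at times 1..t-1.\<close>
definition cont :: "(nat \<Rightarrow> int \<times> int) \<Rightarrow> bool list \<Rightarrow> nat \<Rightarrow> bool" where
  "cont B xs t \<longleftrightarrow> (\<forall>s\<in>{1..<t}. snd (B s) < Sn xs s \<and> Sn xs s < fst (B s))"

definition stop_up :: "(nat \<Rightarrow> int \<times> int) \<Rightarrow> bool list \<Rightarrow> nat \<Rightarrow> bool" where
  "stop_up B xs t \<longleftrightarrow> (\<exists>s\<in>{1..<t}. cont B xs s \<and> Sn xs s \<ge> fst (B s))"

definition stop_low :: "(nat \<Rightarrow> int \<times> int) \<Rightarrow> bool list \<Rightarrow> nat \<Rightarrow> bool" where
  "stop_low B xs t \<longleftrightarrow> (\<exists>s\<in>{1..<t}. cont B xs s \<and> Sn xs s \<le> snd (B s))"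

definition U_new :: "(nat \<Rightarrow> real) \<Rightarrow> real \<Rightarrow> (nat \<Rightarrow> int \<times> int) \<Rightarrow> nat \<Rightarrow> int" where
  "U_new e a B t = (LEAST j::int. j \<ge> 1 \<and>
     Pr a t (\<lambda>xs. cont B xs t \<and> Sn xs t \<ge> j) + Pr a t (\<lambda>xs. stop_up B xs t) \<le> e t)"

definition L_new :: "(nat \<Rightarrow> real) \<Rightarrow> real \<Rightarrow> (nat \<Rightarrow> int \<times> int) \<Rightarrow> nat \<Rightarrow> int" where
  "L_new e a B t = (GREATEST j::int.
     Pr a t (\<lambda>xs. cont B xs t \<and> Sn xs t \<le> j) + Pr a t (\<lambda>xs. stop_low B xs t) \<le> e t)"

text \<open>bnds e a t holds the correct boundaries (U_s, L_s) at all s with 1 <= s <= t.\<close>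
primrec bnds :: "(nat \<Rightarrow> real) \<Rightarrow> real \<Rightarrow> nat \<Rightarrow> (nat \<Rightarrow> int \<times> int)" where
  "bnds e a 0 = (\<lambda>_. (0, 0))"
| "bnds e a (Suc t) = (bnds e a t)(Suc t := (U_new e a (bnds e a t) (Suc t),
                                             L_new e a (bnds e a t) (Suc t)))"

definition Bnd :: "(nat \<Rightarrow> real) \<Rightarrow> real \<Rightarrow> nat \<Rightarrow> int \<times> int" where
  "Bnd e a t = bnds e a t t"

text \<open>P_r(tau > t) = P_r(no stopping at times 1..t).\<close>
definition no_stop_prob :: "(nat \<Rightarrow> real) \<Rightarrow> real \<Rightarrow> real \<Rightarrow> nat \<Rightarrow> real" where
  "no_stop_prob e a r t = Pr r t (\<lambda>xs. cont (Bnd e a) xs (Suc t))"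

end

theory Submission
  imports Defs "HOL-Real_Asymp.Real_Asymp"
begin

text \<open>
  Past time T the spending sequence releases at least \<open>lam * t powr -q\<close> of fresh error per
  step. A Chernoff bound shows that this pays for a deviation of width \<open>x = t powr ((1 + \<eta>) / 2)\<close>,
  whose tail \<open>exp (- t powr \<eta> / 4)\<close> eventually falls below \<open>lam * t powr -q\<close>; hence both
  boundaries lie within \<open>x + 1\<close> of \<open>\<alpha> t\<close>. If \<open>|p - \<alpha>| \<ge> 5 t powr ((\<eta> - 1) / 2)\<close>, the sum
  \<open>S\<^sub>t\<close> concentrates \<open>3 x\<close> beyond the continuation region, so \<open>P\<^sub>p(\<tau> > t) \<le> exp (-2 t powr \<eta>)\<close>.
  The remaining values of p form a window of width \<open>10 t powr ((\<eta> - 1) / 2)\<close> around \<open>\<alpha>\<close>,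
  whose mass is \<open>O(t powr (\<xi> (\<eta> - 1) / 2))\<close> by Hoelder continuity of the distribution function of p.
\<close>

section \<open>Bernoulli path probabilities\<close>

lemma finite_bool_lists_length [simp]: "finite {xs :: bool list. length xs = t}"
  using finite_lists_length_eq[of "UNIV :: bool set" t] by simp

lemma sum_bool_lists_length_Suc:
  fixes f :: "bool list \<Rightarrow> 'a::comm_monoid_add"
  shows "(\<Sum>xs | length xs = Suc t. f xs) = (\<Sum>ys | length ys = t. f (ys @ [True]) + f (ys @ [False]))"
proof -
  have bij: "bij_betw (\<lambda>(ys, b). ys @ [b]) ({ys. length ys = t} \<times> UNIV) {xs :: bool list. length xs = Suc t}"
  proof (rule bij_betwI')
    fix xs :: "bool list" assume "xs \<in> {xs :: bool list. length xs = Suc t}"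
    then show "\<exists>yb \<in> {ys. length ys = t} \<times> UNIV. xs = (\<lambda>(ys, b). ys @ [b]) yb"
      by (intro bexI[of _ "(butlast xs, last xs)"]) (auto intro: append_butlast_last_id[symmetric])
  qed auto
  have "(\<Sum>xs | length xs = Suc t. f xs) = (\<Sum>(ys, b) \<in> {ys. length ys = t} \<times> UNIV. f (ys @ [b]))"
    using sum.reindex_bij_betw[OF bij, of f] by (simp add: case_prod_beta)
  also have "\<dots> = (\<Sum>ys | length ys = t. f (ys @ [True]) + f (ys @ [False]))"
    by (simp add: sum.cartesian_product[symmetric] UNIV_bool add.commute)
  finally show ?thesis .
qed

definition ones :: "bool list \<Rightarrow> nat" where
  "ones xs = length (filter id xs)"

lemma ones_le_length: "ones xs \<le> length xs"
  by (simp add: ones_def)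

lemma Sn_length: "Sn xs (length xs) = int (ones xs)"
  by (simp add: Sn_def ones_def)

lemma path_prob_snoc: "path_prob r (xs @ [b]) = path_prob r xs * (if b then r else 1 - r)"
  by (simp add: path_prob_def)

lemma path_prob_nonneg: "0 \<le> r \<Longrightarrow> r \<le> 1 \<Longrightarrow> 0 \<le> path_prob r xs"
  unfolding path_prob_def by (induction xs) auto

lemma path_prob_eq_power: "path_prob r xs = r ^ ones xs * (1 - r) ^ (length xs - ones xs)"
proof (induction xs)
  case (Cons x xs)
  then show ?case
    using ones_le_length[of xs] by (cases x) (auto simp: path_prob_def ones_def Suc_diff_le)
qed (simp add: path_prob_def ones_def)

lemma sum_path_prob_exp_ones:
  fixes s :: real
  shows "(\<Sum>xs | length xs = t. path_prob r xs * exp (s * ones xs)) = (1 - r + r * exp s) ^ t"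
proof (induction t)
  case (Suc t)
  have "(\<Sum>xs | length xs = Suc t. path_prob r xs * exp (s * ones xs))
      = (\<Sum>ys | length ys = t. path_prob r ys * exp (s * ones ys) * (1 - r + r * exp s))"
    unfolding sum_bool_lists_length_Suc
    by (intro sum.cong) (auto simp: path_prob_snoc ones_def exp_add algebra_simps)
  then show ?case
    by (simp add: sum_distrib_right[symmetric] Suc)
qed (simp add: path_prob_def ones_def)

lemma Pr_conv_sum: "Pr r t A = (\<Sum>xs | length xs = t. if A xs then path_prob r xs else 0)"
  unfolding Pr_def by (simp add: sum.inter_filter[symmetric] conj_commute)

lemma Pr_True: "Pr r t (\<lambda>_. True) = 1"
  using sum_path_prob_exp_ones[where s=0] by (simp add: Pr_conv_sum)

lemma Pr_nonneg: "0 \<le> r \<Longrightarrow> r \<le> 1 \<Longrightarrow> 0 \<le> Pr r t A"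
  unfolding Pr_def by (intro sum_nonneg) (simp add: path_prob_nonneg)

lemma Pr_mono:
  "0 \<le> r \<Longrightarrow> r \<le> 1 \<Longrightarrow> (\<And>xs. length xs = t \<Longrightarrow> A xs \<Longrightarrow> B xs) \<Longrightarrow> Pr r t A \<le> Pr r t B"
  unfolding Pr_conv_sum by (intro sum_mono) (auto simp: path_prob_nonneg)

lemma Pr_le_1: "0 \<le> r \<Longrightarrow> r \<le> 1 \<Longrightarrow> Pr r t A \<le> 1"
  using Pr_mono[of r t A "\<lambda>_. True"] by (simp add: Pr_True)

lemma Pr_disj_le: "0 \<le> r \<Longrightarrow> r \<le> 1 \<Longrightarrow> Pr r t (\<lambda>xs. A xs \<or> B xs) \<le> Pr r t A + Pr r t B"
  unfolding Pr_conv_sum sum.distrib[symmetric] by (intro sum_mono) (auto simp: path_prob_nonneg)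

lemma Pr_cong: "(\<And>xs. length xs = t \<Longrightarrow> A xs = B xs) \<Longrightarrow> Pr r t A = Pr r t B"
  unfolding Pr_def by (rule sum.cong) auto

lemma Pr_eq_0: "(\<And>xs. length xs = t \<Longrightarrow> \<not> A xs) \<Longrightarrow> Pr r t A = 0"
  unfolding Pr_def by (rule sum.neutral) auto

lemma Pr_Suc_eq:
  assumes "\<And>ys b. length ys = t \<Longrightarrow> A (ys @ [b]) = A' ys"
  shows "Pr r (Suc t) A = Pr r t A'"
  unfolding Pr_conv_sum sum_bool_lists_length_Suc
  by (intro sum.cong) (auto simp: assms path_prob_snoc algebra_simps)

lemma measurable_Pr [measurable]:
  assumes [measurable]: "p \<in> borel_measurable M"
  shows "(\<lambda>w. Pr (p w) t A) \<in> borel_measurable M"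
  unfolding Pr_def path_prob_eq_power by measurable

lemma exp_le_one_plus_sq:
  fixes s :: real assumes "\<bar>s\<bar> \<le> 1" shows "exp s \<le> 1 + s + s\<^sup>2"
proof (cases "0 \<le> s")
  case True then show ?thesis using assms exp_bound by simp
next
  case False
  then have "exp s = inverse (exp (- s))" by (simp add: exp_minus)
  also have "\<dots> \<le> inverse (1 - s)"
    using False exp_ge_add_one_self[of "- s"] by (intro le_imp_inverse_le) auto
  also have "\<dots> \<le> 1 + s + s\<^sup>2"
  proof -
    have "s ^ 3 \<le> 0"
      using False unfolding power3_eq_cube by (intro mult_nonneg_nonpos) auto
    then have "1 \<le> (1 - s) * (1 + s + s\<^sup>2)"
      by (simp add: algebra_simps power2_eq_square power3_eq_cube)
    then show ?thesis using False by (simp add: field_simps)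
  qed
  finally show ?thesis .
qed

lemma bernoulli_mgf_le:
  fixes r s :: real assumes "0 \<le> r" "r \<le> 1" "\<bar>s\<bar> \<le> 1"
  shows "1 - r + r * exp s \<le> exp (r * s + s\<^sup>2)"
proof -
  have "1 - r + r * exp s \<le> 1 + r * (s + s\<^sup>2)"
    using mult_left_mono[OF exp_le_one_plus_sq[OF assms(3)] assms(1)] by (simp add: algebra_simps)
  also have "\<dots> \<le> exp (r * (s + s\<^sup>2))"
    by (metis add.commute exp_ge_add_one_self)
  also have "\<dots> \<le> exp (r * s + s\<^sup>2)"
    using mult_left_le_one_le[of "s\<^sup>2" r] assms(1,2) by (simp add: algebra_simps)
  finally show ?thesis .
qed

lemma Pr_le_exp_moment:
  fixes r s c :: real
  assumes "0 \<le> r" "r \<le> 1" and "\<And>xs. P xs \<Longrightarrow> c \<le> s * ones xs"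
  shows "Pr r t P \<le> exp (- c) * (1 - r + r * exp s) ^ t"
proof -
  have "Pr r t P \<le> (\<Sum>xs | length xs = t. path_prob r xs * exp (s * ones xs - c))"
    unfolding Pr_conv_sum
  proof (intro sum_mono)
    fix xs
    have "P xs \<Longrightarrow> path_prob r xs \<le> path_prob r xs * exp (s * ones xs - c)"
      using assms(3)[of xs] path_prob_nonneg[OF assms(1,2), of xs]
      by (intro mult_le_cancel_left1[THEN iffD2] disjI1 conjI) auto
    then show "(if P xs then path_prob r xs else 0) \<le> path_prob r xs * exp (s * ones xs - c)"
      using path_prob_nonneg[OF assms(1,2), of xs] by auto
  qed
  also have "\<dots> = (\<Sum>xs | length xs = t. path_prob r xs * exp (s * ones xs)) / exp c"
    by (simp add: exp_diff sum_divide_distrib)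
  also have "\<dots> = exp (- c) * (1 - r + r * exp s) ^ t"
    by (simp add: sum_path_prob_exp_ones exp_minus field_simps)
  finally show ?thesis .
qed

lemma binomial_tail:
  fixes r y \<sigma> :: real
  assumes r: "0 \<le> r" "r \<le> 1" and t: "0 < t" and y: "0 \<le> y" and \<sigma>: "\<bar>\<sigma>\<bar> = 1"
  shows "Pr r t (\<lambda>xs. y \<le> \<sigma> * (ones xs - r * t)) \<le> exp (- y\<^sup>2 / (4 * real t))"
proof (cases "y \<le> 2 * real t")
  case False
  have "0 \<le> r * t" "r * t \<le> t"
    using r by (auto intro: mult_left_le_one_le)
  then have bound: "\<sigma> * (ones xs - r * t) \<le> t" if "length xs = t" for xs
    using that ones_le_length[of xs] \<sigma> abs_ge_self[of "\<sigma> * (ones xs - r * t)"]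
    by (auto simp: abs_mult abs_le_iff)
  then have "Pr r t (\<lambda>xs. y \<le> \<sigma> * (ones xs - r * t)) = 0"
    using False by (intro Pr_eq_0) (smt (verit) bound of_nat_0_le_iff)
  then show ?thesis by simp
next
  case True
  define s where "s = \<sigma> * y / (2 * t)"
  have s: "\<bar>s\<bar> \<le> 1" using True t y \<sigma> by (simp add: s_def abs_mult abs_divide)
  have "Pr r t (\<lambda>xs. y \<le> \<sigma> * (ones xs - r * t))
      \<le> exp (- (s * r * t + y\<^sup>2 / (2 * t))) * (1 - r + r * exp s) ^ t"
  proof (rule Pr_le_exp_moment[OF r])
    fix xs assume "y \<le> \<sigma> * (ones xs - r * t)"
    then have "y / (2 * t) * y \<le> y / (2 * t) * (\<sigma> * (ones xs - r * t))"
      using t y by (intro mult_left_mono) auto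
    then show "s * r * t + y\<^sup>2 / (2 * t) \<le> s * ones xs"
      by (simp add: s_def power2_eq_square algebra_simps)
  qed
  also have "\<dots> \<le> exp (- (s * r * t + y\<^sup>2 / (2 * t))) * exp (r * s + s\<^sup>2) ^ t"
    using r bernoulli_mgf_le[OF r s] by (intro mult_left_mono power_mono) auto
  also have "\<dots> = exp (- y\<^sup>2 / (2 * t) + t * s\<^sup>2)"
    by (simp add: exp_of_nat_mult[symmetric] exp_add[symmetric] algebra_simps)
  also have "t * s\<^sup>2 = y\<^sup>2 / (4 * real t)"
    using t \<sigma> by (simp add: s_def power2_eq_square field_simps abs_mult_self_eq[of \<sigma>, symmetric])
  finally show ?thesis by simp
qed

corollary binomial_upper_tail:
  fixes r y :: real assumes "0 \<le> r" "r \<le> 1" "0 < t" "0 \<le> y"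
  shows "Pr r t (\<lambda>xs. r * t + y \<le> ones xs) \<le> exp (- y\<^sup>2 / (4 * real t))"
  using binomial_tail[OF assms, of 1] by (simp add: algebra_simps)

corollary binomial_lower_tail:
  fixes r y :: real assumes "0 \<le> r" "r \<le> 1" "0 < t" "0 \<le> y"
  shows "Pr r t (\<lambda>xs. ones xs \<le> r * t - y) \<le> exp (- y\<^sup>2 / (4 * real t))"
  using binomial_tail[OF assms, of "- 1"] by (simp add: algebra_simps)

section \<open>The stopping boundaries\<close>

lemma bnds_eq: "bnds e a t s = (if s \<le> t then Bnd e a s else (0, 0))"
  by (induction t arbitrary: s) (auto simp: Bnd_def)

lemma cont_cong: "(\<And>s. 1 \<le> s \<Longrightarrow> s < t \<Longrightarrow> B s = B' s) \<Longrightarrow> cont B xs t = cont B' xs t"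
  unfolding cont_def by auto

lemma stop_up_cong: "(\<And>s. 1 \<le> s \<Longrightarrow> s < t \<Longrightarrow> B s = B' s) \<Longrightarrow> stop_up B xs t = stop_up B' xs t"
  unfolding stop_up_def by (intro bex_cong refl conj_cong cont_cong) auto

lemma stop_low_cong: "(\<And>s. 1 \<le> s \<Longrightarrow> s < t \<Longrightarrow> B s = B' s) \<Longrightarrow> stop_low B xs t = stop_low B' xs t"
  unfolding stop_low_def by (intro bex_cong refl conj_cong cont_cong) auto

lemma Sn_snoc: "s \<le> length xs \<Longrightarrow> Sn (xs @ [b]) s = Sn xs s"
  by (simp add: Sn_def)

lemma Sn_le: "Sn xs s \<le> int s"
  unfolding Sn_def by (metis dual_order.trans length_filter_le length_take min.cobounded2 of_nat_mono)

lemma cont_snoc: "t \<le> Suc (length xs) \<Longrightarrow> cont B (xs @ [b]) t = cont B xs t"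
  unfolding cont_def by (intro ball_cong refl) (auto simp: Sn_snoc)

lemma stop_up_snoc: "t \<le> Suc (length xs) \<Longrightarrow> stop_up B (xs @ [b]) t = stop_up B xs t"
  unfolding stop_up_def by (intro bex_cong refl) (auto simp: Sn_snoc cont_snoc)

lemma stop_low_snoc: "t \<le> Suc (length xs) \<Longrightarrow> stop_low B (xs @ [b]) t = stop_low B xs t"
  unfolding stop_low_def by (intro bex_cong refl) (auto simp: Sn_snoc cont_snoc)

lemma stop_up_Suc:
  "1 \<le> t \<Longrightarrow> stop_up B xs (Suc t) \<longleftrightarrow> stop_up B xs t \<or> cont B xs t \<and> fst (B t) \<le> Sn xs t"
  unfolding stop_up_def by (auto simp: less_Suc_eq)

lemma stop_low_Suc:
  "1 \<le> t \<Longrightarrow> stop_low B xs (Suc t) \<longleftrightarrow> stop_low B xs t \<or> cont B xs t \<and> Sn xs t \<le> snd (B t)"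
  unfolding stop_low_def by (auto simp: less_Suc_eq)

lemma cont_or_stop: "cont B xs t \<or> stop_up B xs t \<or> stop_low B xs t"
proof -
  let ?exit = "\<lambda>s. 1 \<le> s \<and> s < t \<and> \<not> (snd (B s) < Sn xs s \<and> Sn xs s < fst (B s))"
  have "stop_up B xs t \<or> stop_low B xs t" if "\<exists>s. ?exit s"
  proof -
    from that obtain s where "?exit s" "\<And>s'. s' < s \<Longrightarrow> \<not> ?exit s'"
      using exists_least_iff[of ?exit] by blast
    then show ?thesis
      unfolding stop_up_def stop_low_def cont_def by (auto intro!: bexI[of _ s])
  qed
  then show ?thesis unfolding cont_def by force
qed

lemma Least_int_bounded_below:
  fixes P :: "int \<Rightarrow> bool" assumes "P k" "\<And>j. P j \<Longrightarrow> lo \<le> j"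
  shows "P (LEAST j. P j)" "(LEAST j. P j) \<le> k"
proof -
  let ?S = "{j. P j \<and> j \<le> k}"
  have "finite ?S" by (rule finite_subset[of _ "{lo..k}"]) (auto dest: assms(2))
  then have "Min ?S \<in> ?S" "\<And>j. j \<in> ?S \<Longrightarrow> Min ?S \<le> j"
    using Min_in[of ?S] Min_le[of ?S] assms(1) by auto
  moreover have "(LEAST j. P j) = Min ?S"
    by (rule Least_equality) (use calculation in \<open>auto, fastforce\<close>)
  ultimately show "P (LEAST j. P j)" "(LEAST j. P j) \<le> k" by auto
qed

lemma Greatest_int_bounded_above:
  fixes P :: "int \<Rightarrow> bool" assumes "P k" "\<And>j. P j \<Longrightarrow> j \<le> hi"
  shows "P (GREATEST j. P j)" "k \<le> (GREATEST j. P j)"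
proof -
  let ?S = "{j. P j \<and> k \<le> j}"
  have "finite ?S" by (rule finite_subset[of _ "{k..hi}"]) (auto dest: assms(2))
  then have "Max ?S \<in> ?S" "\<And>j. j \<in> ?S \<Longrightarrow> j \<le> Max ?S"
    using Max_in[of ?S] Max_ge[of ?S] assms(1) by auto
  moreover have "(GREATEST j. P j) = Max ?S"
    by (rule Greatest_equality) (use calculation in \<open>auto, fastforce\<close>)
  ultimately show "P (GREATEST j. P j)" "k \<le> (GREATEST j. P j)" by auto
qed

text \<open>Spending less than 1/2 keeps the set maximised in the definition of \<open>L\<^sub>t\<close> bounded above,
  so that \<open>GREATEST\<close> does not return a junk value.\<close>

locale spending_boundaries =
  fixes e :: "nat \<Rightarrow> real" and a :: real
  assumes a_nonneg: "0 \<le> a" and a_le_1: "a \<le> 1"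
    and e_0_nonneg: "0 \<le> e 0" and e_mono: "mono e" and e_less_half: "\<And>t. e t < 1/2"
begin

abbreviation B :: "nat \<Rightarrow> int \<times> int" where
  "B \<equiv> Bnd e a"

definition upper_admissible :: "nat \<Rightarrow> int \<Rightarrow> bool" where
  "upper_admissible t j \<longleftrightarrow>
     1 \<le> j \<and> Pr a t (\<lambda>xs. cont B xs t \<and> j \<le> Sn xs t) + Pr a t (\<lambda>xs. stop_up B xs t) \<le> e t"

definition lower_admissible :: "nat \<Rightarrow> int \<Rightarrow> bool" where
  "lower_admissible t j \<longleftrightarrow>
     Pr a t (\<lambda>xs. cont B xs t \<and> Sn xs t \<le> j) + Pr a t (\<lambda>xs. stop_low B xs t) \<le> e t"

lemma fst_Bnd_Suc: "fst (B (Suc t)) = (LEAST j. upper_admissible (Suc t) j)"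
proof -
  have "fst (B (Suc t)) = U_new e a (bnds e a t) (Suc t)"
    by (simp add: Bnd_def)
  then show ?thesis
    unfolding U_new_def upper_admissible_def
    by (simp add: cont_cong[of "Suc t" "bnds e a t" B] stop_up_cong[of "Suc t" "bnds e a t" B] bnds_eq)
qed

lemma snd_Bnd_Suc: "snd (B (Suc t)) = (GREATEST j. lower_admissible (Suc t) j)"
proof -
  have "snd (B (Suc t)) = L_new e a (bnds e a t) (Suc t)"
    by (simp add: Bnd_def)
  then show ?thesis
    unfolding L_new_def lower_admissible_def
    by (simp add: cont_cong[of "Suc t" "bnds e a t" B] stop_low_cong[of "Suc t" "bnds e a t" B] bnds_eq)
qed

lemma Pr_stop_up_Suc: "Pr a (Suc t) (\<lambda>xs. stop_up B xs (Suc t)) = Pr a t (\<lambda>xs. stop_up B xs (Suc t))"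
  by (rule Pr_Suc_eq) (simp add: stop_up_snoc)

lemma Pr_stop_low_Suc: "Pr a (Suc t) (\<lambda>xs. stop_low B xs (Suc t)) = Pr a t (\<lambda>xs. stop_low B xs (Suc t))"
  by (rule Pr_Suc_eq) (simp add: stop_low_snoc)

lemma upper_admissible_fst_Bnd:
  assumes spent: "Pr a t (\<lambda>xs. stop_up B xs (Suc t)) \<le> e t"
  shows "upper_admissible (Suc t) (fst (B (Suc t)))"
    and "upper_admissible (Suc t) j \<Longrightarrow> fst (B (Suc t)) \<le> j"
proof -
  have "Pr a (Suc t) (\<lambda>xs. cont B xs (Suc t) \<and> int t + 2 \<le> Sn xs (Suc t)) = 0"
    by (intro Pr_eq_0) (smt (verit) Sn_le of_nat_Suc)
  then have "upper_admissible (Suc t) (int t + 2)"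
    using spent monoD[OF e_mono, of t "Suc t"] by (simp add: upper_admissible_def Pr_stop_up_Suc)
  moreover have "\<And>j. upper_admissible (Suc t) j \<Longrightarrow> 1 \<le> j"
    by (simp add: upper_admissible_def)
  ultimately show "upper_admissible (Suc t) (fst (B (Suc t)))"
    and "upper_admissible (Suc t) j \<Longrightarrow> fst (B (Suc t)) \<le> j"
    unfolding fst_Bnd_Suc by (blast intro: Least_int_bounded_below)+
qed

lemma lower_admissible_snd_Bnd:
  assumes spent_up: "Pr a t (\<lambda>xs. stop_up B xs (Suc t)) \<le> e t"
    and spent_low: "Pr a t (\<lambda>xs. stop_low B xs (Suc t)) \<le> e t"
  shows "lower_admissible (Suc t) (snd (B (Suc t)))"
    and "lower_admissible (Suc t) j \<Longrightarrow> j \<le> snd (B (Suc t))"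
proof -
  have "Pr a (Suc t) (\<lambda>xs. cont B xs (Suc t) \<and> Sn xs (Suc t) \<le> -1) = 0"
    by (intro Pr_eq_0) (simp add: Sn_def)
  then have "lower_admissible (Suc t) (-1)"
    using spent_low monoD[OF e_mono, of t "Suc t"] by (simp add: lower_admissible_def Pr_stop_low_Suc)
  moreover have "j \<le> int t" if "lower_admissible (Suc t) j" for j
  proof (rule ccontr)
    let ?cont = "\<lambda>xs. cont B xs (Suc t)"
      and ?up = "\<lambda>xs. stop_up B xs (Suc t)" and ?low = "\<lambda>xs. stop_low B xs (Suc t)"
    assume "\<not> j \<le> int t"
    then have "Pr a (Suc t) (\<lambda>xs. ?cont xs \<and> Sn xs (Suc t) \<le> j) = Pr a (Suc t) ?cont"
      by (intro Pr_cong) (smt (verit) Sn_le of_nat_Suc)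
    then have "Pr a (Suc t) ?cont + Pr a (Suc t) ?low \<le> e (Suc t)"
      using that by (simp add: lower_admissible_def)
    moreover have "1 \<le> Pr a (Suc t) ?cont + Pr a (Suc t) ?up + Pr a (Suc t) ?low"
      using Pr_True[of a "Suc t"] cont_or_stop[of B _ "Suc t"]
        Pr_disj_le[OF a_nonneg a_le_1, of "Suc t" ?cont "\<lambda>xs. ?up xs \<or> ?low xs"]
        Pr_disj_le[OF a_nonneg a_le_1, of "Suc t" ?up ?low]
      by simp
    ultimately show False
      using spent_up e_less_half[of t] e_less_half[of "Suc t"] by (simp add: Pr_stop_up_Suc)
  qed
  ultimately show "lower_admissible (Suc t) (snd (B (Suc t)))"
    and "lower_admissible (Suc t) j \<Longrightarrow> j \<le> snd (B (Suc t))"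
    unfolding snd_Bnd_Suc by (blast intro: Greatest_int_bounded_above)+
qed

lemma Pr_stop_le_spent:
  "Pr a t (\<lambda>xs. stop_up B xs (Suc t)) \<le> e t \<and> Pr a t (\<lambda>xs. stop_low B xs (Suc t)) \<le> e t"
proof (induction t)
  case 0
  then show ?case using e_0_nonneg by (simp add: Pr_eq_0 stop_up_def stop_low_def)
next
  case (Suc t)
  have "Pr a (Suc t) (\<lambda>xs. stop_up B xs (Suc (Suc t)))
      \<le> Pr a (Suc t) (\<lambda>xs. stop_up B xs (Suc t))
        + Pr a (Suc t) (\<lambda>xs. cont B xs (Suc t) \<and> fst (B (Suc t)) \<le> Sn xs (Suc t))"
    unfolding stop_up_Suc[of "Suc t", simplified] by (rule Pr_disj_le[OF a_nonneg a_le_1])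
  also have "\<dots> \<le> e (Suc t)"
    using upper_admissible_fst_Bnd(1)[of t] Suc unfolding upper_admissible_def by linarith
  moreover have "Pr a (Suc t) (\<lambda>xs. stop_low B xs (Suc (Suc t)))
      \<le> Pr a (Suc t) (\<lambda>xs. stop_low B xs (Suc t))
        + Pr a (Suc t) (\<lambda>xs. cont B xs (Suc t) \<and> Sn xs (Suc t) \<le> snd (B (Suc t)))"
    unfolding stop_low_Suc[of "Suc t", simplified] by (rule Pr_disj_le[OF a_nonneg a_le_1])
  moreover have "\<dots> \<le> e (Suc t)"
    using lower_admissible_snd_Bnd(1)[of t] Suc unfolding lower_admissible_def by linarith
  ultimately show ?case by linarith
qed

lemma fst_Bnd_Suc_le: "upper_admissible (Suc t) j \<Longrightarrow> fst (B (Suc t)) \<le> j"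
  using upper_admissible_fst_Bnd(2) Pr_stop_le_spent by blast

lemma snd_Bnd_Suc_ge: "lower_admissible (Suc t) j \<Longrightarrow> j \<le> snd (B (Suc t))"
  using lower_admissible_snd_Bnd(2) Pr_stop_le_spent by blast

end

locale polynomial_spending = spending_boundaries +
  fixes lam q :: real and T :: nat
  assumes lam_pos: "0 < lam" and T_pos: "1 \<le> T"
    and e_increment: "\<And>t. T \<le> t \<Longrightarrow> lam * real t powr (- q) \<le> e t - e (t - 1)"
begin

lemma fst_Bnd_le:
  assumes t: "T \<le> t" and x: "0 \<le> x" "exp (- x\<^sup>2 / (4 * real t)) \<le> lam * real t powr (- q)"
  shows "fst (B t) \<le> a * t + x + 1"
proof -
  obtain t' where t': "t = Suc t'" using t T_pos by (cases t) auto
  define j where "j = max 1 \<lceil>a * t + x\<rceil>"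
  have "Pr a t (\<lambda>xs. cont B xs t \<and> j \<le> Sn xs t) \<le> Pr a t (\<lambda>xs. a * t + x \<le> ones xs)"
    by (rule Pr_mono[OF a_nonneg a_le_1]) (auto simp: j_def Sn_length ceiling_le_iff)
  also have "\<dots> \<le> lam * real t powr (- q)"
    using binomial_upper_tail[OF a_nonneg a_le_1, of t x] t' x by simp
  finally have "upper_admissible t j"
    using Pr_stop_le_spent[of t'] e_increment[OF t] t'
    by (simp add: upper_admissible_def j_def Pr_stop_up_Suc)
  then have "fst (B t) \<le> j" using fst_Bnd_Suc_le t' by simp
  moreover have "j \<le> a * t + x + 1"
    using a_nonneg x zero_le_mult_iff[of a t] by (simp add: j_def max_def)
  ultimately show ?thesis by linarith
qed

lemma snd_Bnd_ge:
  assumes t: "T \<le> t" and x: "0 \<le> x" "exp (- x\<^sup>2 / (4 * real t)) \<le> lam * real t powr (- q)"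
  shows "a * t - x - 1 \<le> snd (B t)"
proof -
  obtain t' where t': "t = Suc t'" using t T_pos by (cases t) auto
  define j where "j = \<lfloor>a * t - x\<rfloor>"
  have "Pr a t (\<lambda>xs. cont B xs t \<and> Sn xs t \<le> j) \<le> Pr a t (\<lambda>xs. ones xs \<le> a * t - x)"
    by (rule Pr_mono[OF a_nonneg a_le_1]) (auto simp: j_def Sn_length le_floor_iff)
  also have "\<dots> \<le> lam * real t powr (- q)"
    using binomial_lower_tail[OF a_nonneg a_le_1, of t x] t' x by simp
  finally have "lower_admissible t j"
    using Pr_stop_le_spent[of t'] e_increment[OF t] t'
    by (simp add: lower_admissible_def Pr_stop_low_Suc)
  then have "j \<le> snd (B t)" using snd_Bnd_Suc_ge t' by simp
  moreover have "a * t - x - 1 \<le> j" by (simp add: j_def)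
  ultimately show ?thesis by linarith
qed

lemma no_stop_prob_le_far:
  assumes r: "0 \<le> r" "r \<le> 1" and t: "T \<le> t"
    and x: "0 \<le> x" "exp (- x\<^sup>2 / (4 * real t)) \<le> lam * real t powr (- q)"
    and y: "0 \<le> y" and far: "x + y + 1 \<le> \<bar>r - a\<bar> * t"
  shows "no_stop_prob e a r t \<le> exp (- y\<^sup>2 / (4 * real t))"
proof -
  have t_pos: "0 < t" using t T_pos by simp
  have inside: "snd (B t) < ones xs \<and> ones xs < fst (B t)" if "length xs = t" "cont B xs (Suc t)" for xs
  proof -
    have "snd (B t) < Sn xs t \<and> Sn xs t < fst (B t)"
      using that(2) t_pos unfolding cont_def by auto
    then show ?thesis by (metis that(1) Sn_length)
  qed
  note U = fst_Bnd_le[OF t x] and L = snd_Bnd_ge[OF t x]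
  show ?thesis
  proof (cases "a \<le> r")
    case True
    then have "no_stop_prob e a r t \<le> Pr r t (\<lambda>xs. ones xs \<le> r * t - y)"
      unfolding no_stop_prob_def using inside U far
      by (intro Pr_mono[OF r]) (fastforce simp: algebra_simps)
    also have "\<dots> \<le> exp (- y\<^sup>2 / (4 * real t))" using binomial_lower_tail[OF r t_pos y] .
    finally show ?thesis .
  next
    case False
    then have "no_stop_prob e a r t \<le> Pr r t (\<lambda>xs. r * t + y \<le> ones xs)"
      unfolding no_stop_prob_def using inside L far
      by (intro Pr_mono[OF r]) (fastforce simp: algebra_simps)
    also have "\<dots> \<le> exp (- y\<^sup>2 / (4 * real t))" using binomial_upper_tail[OF r t_pos y] .
    finally show ?thesis .
  qed
qed

end

section \<open>Averaging over the random success probability\<close>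

lemma measure_near_le_holder:
  fixes M :: "'w measure" and p :: "'w \<Rightarrow> real"
  assumes "prob_space M" and [measurable]: "p \<in> borel_measurable M"
    and holder: "\<forall>x\<in>{A<..<C}. \<forall>y\<in>{A<..<C}.
      \<bar>measure M {w\<in>space M. p w \<le> x} - measure M {w\<in>space M. p w \<le> y}\<bar> \<le> c * \<bar>x - y\<bar> powr \<xi>"
    and "A < a - \<delta>" "a + \<delta> < C" "0 < \<delta>"
  shows "measure M {w\<in>space M. \<bar>p w - a\<bar> < \<delta>} \<le> c * (2 * \<delta>) powr \<xi>"
proof -
  interpret prob_space M by fact
  have "measure M {w\<in>space M. \<bar>p w - a\<bar> < \<delta>}
      \<le> measure M ({w\<in>space M. p w \<le> a + \<delta>} - {w\<in>space M. p w \<le> a - \<delta>})"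
    by (intro finite_measure_mono) auto
  also have "\<dots> = measure M {w\<in>space M. p w \<le> a + \<delta>} - measure M {w\<in>space M. p w \<le> a - \<delta>}"
    using \<open>0 < \<delta>\<close> by (intro finite_measure_Diff) auto
  also have "\<dots> \<le> c * \<bar>(a + \<delta>) - (a - \<delta>)\<bar> powr \<xi>"
    using holder[rule_format, of "a + \<delta>" "a - \<delta>"] assms(4-6) by auto
  also have "\<dots> = c * (2 * \<delta>) powr \<xi>"
    using \<open>0 < \<delta>\<close> by simp
  finally show ?thesis .
qed

lemma integral_le_const_plus_measure:
  assumes "prob_space M" "integrable M f" "S \<in> sets M"
    and "\<And>w. w \<in> space M \<Longrightarrow> f w \<le> b + indicator S w"
  shows "(\<integral>w. f w \<partial>M) \<le> b + measure M S"
proof -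
  interpret prob_space M by fact
  have "(\<integral>w. f w \<partial>M) \<le> (\<integral>w. b + indicator S w \<partial>M)"
    using assms(2-4)
    by (intro integral_mono)
       (auto intro!: Bochner_Integration.integrable_add integrable_real_indicator
             simp: emeasure_finite less_top[symmetric])
  also have "\<dots> = b + measure M S"
    using assms(3)
    by (subst Bochner_Integration.integral_add)
       (auto intro!: integrable_real_indicator simp: emeasure_finite less_top[symmetric] prob_space)
  finally show ?thesis .
qed

context polynomial_spending
begin

lemma no_stop_prob_le_outside_window:
  assumes r: "0 \<le> r" "r \<le> 1" and \<eta>: "0 \<le> \<eta>" and t: "T \<le> t"
    and budget: "exp (- (real t powr \<eta>) / 4) \<le> lam * real t powr (- q)"
    and far: "5 * real t powr ((\<eta> - 1) / 2) \<le> \<bar>r - a\<bar>"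
  shows "no_stop_prob e a r t \<le> exp (- 2 * real t powr \<eta>)"
proof -
  have t_pos: "0 < real t" using t T_pos by simp
  define x where "x = real t powr ((1 + \<eta>) / 2)"
  have x_sq: "x\<^sup>2 = real t * real t powr \<eta>"
    using t_pos by (simp add: x_def power2_eq_square powr_add[symmetric] powr_add)
  have x_ge_1: "1 \<le> x"
    using t_pos \<eta> by (simp add: x_def ge_one_powr_ge_zero)
  have "x = real t powr ((\<eta> - 1) / 2) * real t powr 1"
    unfolding x_def powr_add[symmetric] by (simp add: field_simps)
  then have "5 * x = 5 * real t powr ((\<eta> - 1) / 2) * t"
    using t_pos by simp
  also have "\<dots> \<le> \<bar>r - a\<bar> * t"
    using far t_pos by (intro mult_right_mono) auto
  finally have "x + 3 * x + 1 \<le> \<bar>r - a\<bar> * t" using x_ge_1 by linarith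
  moreover have "exp (- x\<^sup>2 / (4 * real t)) \<le> lam * real t powr (- q)"
    using budget t_pos by (simp add: x_sq)
  ultimately have "no_stop_prob e a r t \<le> exp (- (3 * x)\<^sup>2 / (4 * real t))"
    using x_ge_1 by (intro no_stop_prob_le_far[OF r t]) auto
  also have "\<dots> \<le> exp (- 2 * real t powr \<eta>)"
    using t_pos by (simp add: power_mult_distrib x_sq)
  finally show ?thesis .
qed

lemma eventually_integral_no_stop_prob_le:
  fixes M :: "'w measure" and p :: "'w \<Rightarrow> real"
  assumes M: "prob_space M" and p: "p \<in> borel_measurable M" "\<forall>w\<in>space M. p w \<in> {0..1}"
    and holder: "\<forall>x\<in>{A<..<C}. \<forall>y\<in>{A<..<C}.
      \<bar>measure M {w\<in>space M. p w \<le> x} - measure M {w\<in>space M. p w \<le> y}\<bar> \<le> c * \<bar>x - y\<bar> powr \<xi>"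
    and AC: "A < a" "a < C" and \<eta>: "0 < \<eta>" "\<eta> < 1"
  shows "\<forall>\<^sub>F t in sequentially. (\<integral>w. no_stop_prob e a (p w) t \<partial>M)
           \<le> exp (- 2 * real t powr \<eta>) + c * 10 powr \<xi> * real t powr (\<xi> * (\<eta> - 1) / 2)"
proof -
  interpret prob_space M by fact
  have budget: "\<forall>\<^sub>F t in sequentially. exp (- (real t powr \<eta>) / 4) \<le> lam * real t powr (- q)"
    using \<eta> lam_pos by real_asymp
  have window: "\<forall>\<^sub>F t in sequentially. 5 * real t powr ((\<eta> - 1) / 2) < min (a - A) (C - a)"
    using \<eta> AC by real_asymp
  show ?thesis
    using eventually_ge_at_top[of T] budget window
  proof eventually_elim
    case (elim t)
    have t_pos: "0 < real t" using elim T_pos by simp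
    define \<delta> where "\<delta> = 5 * real t powr ((\<eta> - 1) / 2)"
    define S where "S = {w\<in>space M. \<bar>p w - a\<bar> < \<delta>}"
    have [measurable]: "p \<in> borel_measurable M" by (fact p(1))
    have "(\<integral>w. no_stop_prob e a (p w) t \<partial>M) \<le> exp (- 2 * real t powr \<eta>) + measure M S"
    proof (rule integral_le_const_plus_measure[OF M])
      show "integrable M (\<lambda>w. no_stop_prob e a (p w) t)"
        using p(2) unfolding no_stop_prob_def
        by (intro integrable_const_bound[where B=1]) (auto simp: Pr_le_1 Pr_nonneg)
      show "S \<in> sets M" unfolding S_def by measurable
      fix w assume "w \<in> space M"
      then have "0 \<le> p w" "p w \<le> 1" using p(2) by auto
      then show "no_stop_prob e a (p w) t \<le> exp (- 2 * real t powr \<eta>) + indicator S w"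
        using no_stop_prob_le_outside_window[of "p w" \<eta> t] elim \<eta> \<open>w \<in> space M\<close>
          Pr_le_1[of "p w" t]
        by (cases "w \<in> S") (auto simp: S_def \<delta>_def no_stop_prob_def intro: add_increasing)
    qed
    also have "measure M S \<le> c * (2 * \<delta>) powr \<xi>"
      unfolding S_def using elim t_pos
      by (intro measure_near_le_holder[OF M p(1) holder]) (auto simp: \<delta>_def)
    also have "c * (2 * \<delta>) powr \<xi> = c * 10 powr \<xi> * real t powr (\<xi> * (\<eta> - 1) / 2)"
      using t_pos by (simp add: \<delta>_def powr_mult powr_powr field_simps)
    finally show ?case by simp
  qed
qed

end

lemma smallo_powr_if_eventually_le:
  fixes F :: "nat \<Rightarrow> real"
  assumes F_nonneg: "\<And>t. 0 \<le> F t" and \<xi>: "0 < \<xi>"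
    and bound: "\<And>\<eta>. 0 < \<eta> \<Longrightarrow> \<eta> < 1 \<Longrightarrow>
      \<forall>\<^sub>F t in sequentially. F t \<le> exp (- 2 * real t powr \<eta>) + \<kappa> * real t powr (\<xi> * (\<eta> - 1) / 2)"
    and d: "- \<xi> / 2 < d"
  shows "F \<in> o(\<lambda>t. real t powr d)"
proof -
  define \<eta> where "\<eta> = min (1/2) ((1 + 2 * d / \<xi>) / 2)"
  have k: "- 1 < 2 * d / \<xi>" using d \<xi> by (simp add: field_simps)
  then have \<eta>: "0 < \<eta>" "\<eta> < 1" by (auto simp: \<eta>_def)
  have "\<eta> \<le> (1 + 2 * d / \<xi>) / 2" unfolding \<eta>_def by (rule min.cobounded2)
  then have "\<xi> * (\<eta> - 1) < \<xi> * (2 * d / \<xi>)"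
    using k \<xi> by (intro mult_strict_left_mono) auto
  then have exponent: "\<xi> * (\<eta> - 1) / 2 < d" using \<xi> by simp
  have "(\<lambda>t. exp (- 2 * real t powr \<eta>) + \<kappa> * real t powr (\<xi> * (\<eta> - 1) / 2)) \<in> o(\<lambda>t. real t powr d)"
    using \<eta> exponent by real_asymp
  moreover have "F \<in> O(\<lambda>t. exp (- 2 * real t powr \<eta>) + \<kappa> * real t powr (\<xi> * (\<eta> - 1) / 2))"
    using bound[OF \<eta>] F_nonneg by (intro bigoI[where c=1]) (auto elim!: eventually_mono)
  ultimately show ?thesis using landau_o.big_small_trans by blast
qed

theorem lemma3:
  fixes e :: "nat \<Rightarrow> real" and eps \<alpha> lam q \<xi> :: real and T :: nat
    and \<Omega> :: "'w measure" and p :: "'w \<Rightarrow> real"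
  assumes alpha: "0 < \<alpha>" "\<alpha> < 1"
    and eps: "0 < eps" "eps \<le> 1/4"
    and spend: "0 \<le> e 0" "mono e" "e \<longlonglongrightarrow> eps"
    and incr: "lam > 0" "q > 0" "T \<ge> 1"
      "\<forall>t\<ge>T. e t - e (t - 1) \<ge> lam * real t powr (- q)"
    and P: "prob_space \<Omega>" "p \<in> borel_measurable \<Omega>" "\<forall>\<omega>\<in>space \<Omega>. p \<omega> \<in> {0..1}"
    and holder: "\<xi> > 0"
      "\<exists>a b c. a < \<alpha> \<and> \<alpha> < b \<and> c > 0 \<and>
         (\<forall>x\<in>{a<..<b}. \<forall>y\<in>{a<..<b}.
            \<bar>measure \<Omega> {\<omega>\<in>space \<Omega>. p \<omega> \<le> x} - measure \<Omega> {\<omega>\<in>space \<Omega>. p \<omega> \<le> y}\<bar>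
              \<le> c * \<bar>x - y\<bar> powr \<xi>)"
  shows "(\<forall>\<eta>. 0 < \<eta> \<and> \<eta> < 1 \<longrightarrow> (\<exists>\<kappa> T'. \<forall>t::nat\<ge>T'.
            (\<integral>\<omega>. no_stop_prob e \<alpha> (p \<omega>) t \<partial>\<Omega>)
              \<le> 2 * exp (- 2 * real t powr \<eta>) + \<kappa> * real t powr (\<xi> * (\<eta> - 1) / 2)))
       \<and> (\<forall>d. d > - \<xi> / 2 \<longrightarrow>
            (\<lambda>t::nat. \<integral>\<omega>. no_stop_prob e \<alpha> (p \<omega>) t \<partial>\<Omega>) \<in> o(\<lambda>t. real t powr d))"
proof -
  obtain A C c where AC: "A < \<alpha>" "\<alpha> < C"
    and cdf_holder: "\<forall>x\<in>{A<..<C}. \<forall>y\<in>{A<..<C}.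
      \<bar>measure \<Omega> {\<omega>\<in>space \<Omega>. p \<omega> \<le> x} - measure \<Omega> {\<omega>\<in>space \<Omega>. p \<omega> \<le> y}\<bar> \<le> c * \<bar>x - y\<bar> powr \<xi>"
    using holder(2) by blast
  have "e t < 1/2" for t
    using incseq_le[OF spend(2,3), of t] eps(2) by simp
  then interpret polynomial_spending e \<alpha> lam q T
    using alpha spend(1,2) incr by unfold_locales auto
  define F where "F t = (\<integral>\<omega>. no_stop_prob e \<alpha> (p \<omega>) t \<partial>\<Omega>)" for t
  define \<kappa> where "\<kappa> = c * 10 powr \<xi>"
  have bound: "\<forall>\<^sub>F t in sequentially.
      F t \<le> exp (- 2 * real t powr \<eta>) + \<kappa> * real t powr (\<xi> * (\<eta> - 1) / 2)"
    if "0 < \<eta>" "\<eta> < 1" for \<eta>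
    unfolding F_def \<kappa>_def by (rule eventually_integral_no_stop_prob_le[OF P cdf_holder AC that])
  have F_nonneg: "0 \<le> F t" for t
    unfolding F_def no_stop_prob_def using P(3)
    by (intro Bochner_Integration.integral_nonneg) (auto simp: Pr_nonneg)
  have "\<exists>\<kappa> T'. \<forall>t\<ge>T'.
      F t \<le> 2 * exp (- 2 * real t powr \<eta>) + \<kappa> * real t powr (\<xi> * (\<eta> - 1) / 2)"
    if "0 < \<eta>" "\<eta> < 1" for \<eta>
    using bound[OF that] unfolding eventually_sequentially by (smt (verit) exp_ge_zero)
  then show ?thesis
    using smallo_powr_if_eventually_le[OF F_nonneg holder(1) bound] unfolding F_def by blast
qed

end
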